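(* Consider the coupling process described in the context, run on a hypergraph colouring instance with pinnings $(H,\mathcal P)$, $H=(V,\mathcal E)$, with integer parameters $0<k_2<k_1\le k$ such that $k_1\le|e|\le k$ for all $e\in\mathcal E$, a vertex $v$ and distinct colours $c_1,c_2$. Then: (1) every coloured vertex is in $V_1$ or adjacent to $V_1$, i.e. $V_{\mathrm{col}}\subseteq\Gamma_{\mathrm{ver}}(V_1)$ at the end of the process; (2) the distributions of the output partial colourings $X$ and $Y$ are pre-Gibbs with respect to $\mu_{\mathcal C_1}$ and $\mu_{\mathcal C_2}$ respectively.
   Context: A hypergraph colouring instance with pinnings is a pair $(H,\mathcal P)$ where $H=(V,\mathcal E)$ is a hypergraph and $\mathcal P=\{P_e\subseteq[q]:e\in\mathcal E\}$; a colouring $\sigma\in[q]^V$ is proper if $|\{\sigma(u):u\in e\}\cup P_e|>1$ for all $e$. A partial colouring is an element of $([q]\cup\{-\})^V$, where $-$ means uncoloured; a full colouring $\sigma$ is consistent with a partial colouring $X$ (written $\sigma\models X$) if they agree on all vertices coloured by $X$. $\mathcal C_X$ is the set of proper colourings consistent with $X$, $\mu_{\mathcal C'}$ denotes the uniform distribution on a set $\mathcal C'$, and $\mathcal C_i$ ($i=1,2$) is the set of proper colourings with $v$ coloured $c_i$. For a set $\mathcal C'$ of proper colourings, a distribution $\mu$ on partial colourings is pre-Gibbs with respect to $\mu_{\mathcal C'}$ if for every $\sigma\in\mathcal C'$, $\mu_{\mathcal C'}(\sigma)=\sum_{\sigma':\sigma\models\sigma'}\mu(\sigma')\,\mu_{\mathcal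 C'}(\sigma\mid\sigma')$. The marginal distribution at a vertex $u$ conditioned on a partial colouring $X$ is the law of $\sigma(u)$ for $\sigma$ uniform in $\mathcal C_X$. A partial colouring $X$ satisfies a hyperedge $e$ if the colours of the coloured vertices of $e$ together with $P_e$ contain at least two distinct colours. For $u\in V$, $\Gamma_{\mathrm{ver}}(u)=\{w:\exists e\in\mathcal E,\{u,w\}\subseteq e\}\cup\{u\}$ (with $\mathcal E$ the original hyperedge set) and $\Gamma_{\mathrm{ver}}(U)=\bigcup_{u\in U}\Gamma_{\mathrm{ver}}(u)$. The coupling process: fix arbitrary orderings of vertices and hyperedges. Let $X_0$ ($Y_0$) colour $v$ with $c_1$ ($c_2$) and leave all else uncoloured. Initialise $V_1=\{v\}$, $V_2=V\setminus V_1$, $V_{\mathrm{col}}=\{v\}$, $X=X_0$, $Y=Y_0$, and a working copy $\mathcal E'$ of $\mathcal E$. While some $e\in\mathcal E'$ meets both $V_1$ and $V_2$: let $e$ be the first such hyperedge and $u$ the first vertex of $e\cap V_2$; sample $(c_x,c_y)$ from a maximal coupling of the marginal distribution at $u$ conditioned on $X$ and the marginal at $u$ conditioned on $Y$; colour $u$ by $c_x$ in $X$ and by $c_y$ in $Y$; add $u$ to $V_{\mathrm{col}}$; if $c_x\ne c_y$, move $u$ from $V_2$ to $V_1$; remove from $\mathcal E'$ every hyperedge containing $u$ that is satisfied by both $X$ and $Y$; then for every hyperedge $e'\in\mathcal E'$ containing $u$ with $e'\cap V_1\ne\emptyset$, $e'\cap V_2\neq\emptyset$ and $|e'\cap V_{\mathrm{col}}|=k_2$,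 set $V_1\leftarrow V_1\cup(e'\setminus V_{\mathrm{col}})$, $V_2\leftarrow V\setminus V_1$ and remove $e'$ from $\mathcal E'$. The output is $V_{\mathrm{col}}$, the partition $V_1\sqcup V_2=V$, and the partial colourings $X,Y$ defined on $V_{\mathrm{col}}$. *)

theory Defs
  imports "HOL-Probability.Probability"
begin

text \<open>Hypergraph H = (V, E): hyperedges are indices e in E with vertex sets verts e;
  pinnings are pin e (a subset of the colours {1..q}).  Full colourings are functions
  'v => nat, with colours in {1..q} on V and value 0 (irrelevant) outside V.\<close>

type_synonym 'v pcol = "'v \<Rightarrow> nat option"
type_synonym ('v, 'e) cstate = "'v set \<times> 'v set \<times> 'v pcol \<times> 'v pcol \<times> 'e set"
  \<comment> \<open>(V1, Vcol, X, Y, E') ; V2 is always V - V1\<close>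

definition colourings :: "'v set \<Rightarrow> nat \<Rightarrow> ('v \<Rightarrow> nat) set" where
  "colourings V q = {\<sigma>. (\<forall>u\<in>V. \<sigma> u \<in> {1..q}) \<and> (\<forall>u. u \<notin> V \<longrightarrow> \<sigma> u = 0)}"

definition proper :: "'e set \<Rightarrow> ('e \<Rightarrow> 'v set) \<Rightarrow> ('e \<Rightarrow> nat set) \<Rightarrow> ('v \<Rightarrow> nat) \<Rightarrow> bool" where
  "proper E verts pin \<sigma> = (\<forall>e\<in>E. card (\<sigma> ` verts e \<union> pin e) > 1)"

definition proper_colourings ::
  "'v set \<Rightarrow> 'e set \<Rightarrow> ('e \<Rightarrow> 'v set) \<Rightarrow> ('e \<Rightarrow> nat set) \<Rightarrow> nat \<Rightarrow> ('v \<Rightarrow> nat) set" where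
  "proper_colourings V E verts pin q = {\<sigma> \<in> colourings V q. proper E verts pin \<sigma>}"

definition consistent :: "('v \<Rightarrow> nat) \<Rightarrow> 'v pcol \<Rightarrow> bool" where
  "consistent \<sigma> X = (\<forall>u c. X u = Some c \<longrightarrow> \<sigma> u = c)"

definition CX ::
  "'v set \<Rightarrow> 'e set \<Rightarrow> ('e \<Rightarrow> 'v set) \<Rightarrow> ('e \<Rightarrow> nat set) \<Rightarrow> nat \<Rightarrow> 'v pcol \<Rightarrow> ('v \<Rightarrow> nat) set" where
  "CX V E verts pin q X = {\<sigma> \<in> proper_colourings V E verts pin q. consistent \<sigma> X}"

definition Cfix ::
  "'v set \<Rightarrow> 'e set \<Rightarrow> ('e \<Rightarrow> 'v set) \<Rightarrow> ('e \<Rightarrow> nat set) \<Rightarrow> nat \<Rightarrow> 'v \<Rightarrow> nat \<Rightarrow> ('v \<Rightarrow> nat) set" where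
  "Cfix V E verts pin q v c = {\<sigma> \<in> proper_colourings V E verts pin q. \<sigma> v = c}"

definition marginal ::
  "'v set \<Rightarrow> 'e set \<Rightarrow> ('e \<Rightarrow> 'v set) \<Rightarrow> ('e \<Rightarrow> nat set) \<Rightarrow> nat \<Rightarrow> 'v pcol \<Rightarrow> 'v \<Rightarrow> nat pmf" where
  "marginal V E verts pin q X u = map_pmf (\<lambda>\<sigma>. \<sigma> u) (pmf_of_set (CX V E verts pin q X))"

definition pre_Gibbs :: "'v pcol pmf \<Rightarrow> ('v \<Rightarrow> nat) set \<Rightarrow> bool" where
  "pre_Gibbs \<mu> C' = (\<forall>\<sigma>\<in>C'. pmf (pmf_of_set C') \<sigma> =
      (\<Sum>\<^sub>\<infinity>\<sigma>' \<in> {\<sigma>'. consistent \<sigma> \<sigma>'}.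
          pmf \<mu> \<sigma>' * pmf (cond_pmf (pmf_of_set C') {\<tau>. consistent \<tau> \<sigma>'}) \<sigma>))"

definition is_coupling :: "('a \<times> 'b) pmf \<Rightarrow> 'a pmf \<Rightarrow> 'b pmf \<Rightarrow> bool" where
  "is_coupling r p p' = (map_pmf fst r = p \<and> map_pmf snd r = p')"

definition maximal_coupling :: "('a \<times> 'a) pmf \<Rightarrow> 'a pmf \<Rightarrow> 'a pmf \<Rightarrow> bool" where
  "maximal_coupling r p p' = (is_coupling r p p' \<and>
     (\<forall>r'. is_coupling r' p p' \<longrightarrow>
        measure_pmf.prob r {(a, b). a \<noteq> b} \<le> measure_pmf.prob r' {(a, b). a \<noteq> b}))"

definition satisfies :: "('e \<Rightarrow> 'v set) \<Rightarrow> ('e \<Rightarrow> nat set) \<Rightarrow> 'v pcol \<Rightarrow> 'e \<Rightarrow> bool" where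
  "satisfies verts pin X e = (card ({c. \<exists>w\<in>verts e. X w = Some c} \<union> pin e) \<ge> 2)"

definition Gamma_ver :: "'e set \<Rightarrow> ('e \<Rightarrow> 'v set) \<Rightarrow> 'v set \<Rightarrow> 'v set" where
  "Gamma_ver E verts U = (\<Union>u\<in>U. {w. \<exists>e\<in>E. u \<in> verts e \<and> w \<in> verts e} \<union> {u})"

definition first_of :: "'a list \<Rightarrow> 'a set \<Rightarrow> 'a" where
  "first_of xs S = hd (filter (\<lambda>x. x \<in> S) xs)"

definition crossing :: "'v set \<Rightarrow> ('e \<Rightarrow> 'v set) \<Rightarrow> 'v set \<Rightarrow> 'e \<Rightarrow> bool" where
  "crossing V verts V1 e = (verts e \<inter> V1 \<noteq> {} \<and> verts e \<inter> (V - V1) \<noteq> {})"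

text \<open>One iteration of the while loop (identity once the loop condition fails).
  The chosen vertex u is the first UNCOLOURED vertex of e \<inter> V2;
  if there is none, e is discarded from E'.  The final "for every hyperedge e'" loop
  is performed in the fixed hyperedge order es.\<close>
definition coupling_step ::
  "'v set \<Rightarrow> 'e set \<Rightarrow> ('e \<Rightarrow> 'v set) \<Rightarrow> ('e \<Rightarrow> nat set) \<Rightarrow> nat \<Rightarrow> nat \<Rightarrow> 'v list \<Rightarrow> 'e list \<Rightarrow>
   ('v pcol \<Rightarrow> 'v pcol \<Rightarrow> 'v \<Rightarrow> (nat \<times> nat) pmf) \<Rightarrow> ('v, 'e) cstate \<Rightarrow> ('v, 'e) cstate pmf" where
  "coupling_step V E verts pin q k2 vs es coup s =
    (case s of (V1, Vcol, X, Y, E') \<Rightarrow>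
      if \<not> (\<exists>e\<in>E'. crossing V verts V1 e) then return_pmf s
      else
        let e = first_of es {e \<in> E'. crossing V verts V1 e};
            U = verts e \<inter> (V - V1) - Vcol
        in if U = {} then return_pmf (V1, Vcol, X, Y, E' - {e})
        else
          let u = first_of vs U
          in map_pmf (\<lambda>(cx, cy).
               let X' = X(u := Some cx);
                   Y' = Y(u := Some cy);
                   Vcol' = insert u Vcol;
                   V1' = (if cx \<noteq> cy then insert u V1 else V1);
                   E1 = E' - {e'. u \<in> verts e' \<and> satisfies verts pin X' e' \<and> satisfies verts pin Y' e'};
                   (V1'', E2) = fold (\<lambda>e' (A, F).
                        if e' \<in> F \<and> u \<in> verts e' \<and> crossing V verts A e' \<and> card (verts e' \<inter> Vcol') = k2
                        then (A \<union> (verts e' - Vcol'), F - {e'}) else (A, F)) es (V1', E1)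
               in (V1'', Vcol', X', Y', E2))
             (coup X Y u))"

definition coupling_init :: "'e set \<Rightarrow> 'v \<Rightarrow> nat \<Rightarrow> nat \<Rightarrow> ('v, 'e) cstate" where
  "coupling_init E v c1 c2 = ({v}, {v}, (\<lambda>_. None)(v := Some c1), (\<lambda>_. None)(v := Some c2), E)"

text \<open>The process terminates after at most card V + card E iterations (each non-final
  iteration either colours a new vertex or removes a hyperedge from E'), so iterating
  that many times gives the distribution of the final state.\<close>
definition coupling_output ::
  "'v set \<Rightarrow> 'e set \<Rightarrow> ('e \<Rightarrow> 'v set) \<Rightarrow> ('e \<Rightarrow> nat set) \<Rightarrow> nat \<Rightarrow> nat \<Rightarrow> 'v list \<Rightarrow> 'e list \<Rightarrow>
   ('v pcol \<Rightarrow> 'v pcol \<Rightarrow> 'v \<Rightarrow> (nat \<times> nat) pmf) \<Rightarrow> 'v \<Rightarrow> nat \<Rightarrow> nat \<Rightarrow> ('v, 'e) cstate pmf" where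
  "coupling_output V E verts pin q k2 vs es coup v c1 c2 =
    ((\<lambda>p. bind_pmf p (coupling_step V E verts pin q k2 vs es coup)) ^^ (card V + card E))
      (return_pmf (coupling_init E v c1 c2))"

definition out_V1 :: "('v, 'e) cstate \<Rightarrow> 'v set" where "out_V1 s = fst s"
definition out_Vcol :: "('v, 'e) cstate \<Rightarrow> 'v set" where "out_Vcol s = fst (snd s)"
definition out_X :: "('v, 'e) cstate \<Rightarrow> 'v pcol" where "out_X s = fst (snd (snd s))"
definition out_Y :: "('v, 'e) cstate \<Rightarrow> 'v pcol" where "out_Y s = fst (snd (snd (snd s)))"

end

theory Submission
  imports Defs
begin

text \<open>Both parts are invariants of a single step of the process.  A vertex is only coloured
  when it lies in a hyperedge meeting V1, and V1 only grows, so coloured vertices stay within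
  distance one of V1.  For the distributional part, X alone evolves as the sequential sampler
  that reveals one vertex at a time from its conditional marginal given the colours revealed so
  far, because the coupling has the right first marginal.  Such revealing steps leave the mixture
  of the uniform distributions on the consistent proper colourings unchanged, and that mixture
  starts as the uniform distribution on C1.  Being such a mixture of the conditional laws is
  exactly the pre-Gibbs property.\<close>

lemma cond_pmf_of_set:
  assumes "finite C" "C \<inter> A \<noteq> {}"
  shows "cond_pmf (pmf_of_set C) A = pmf_of_set (C \<inter> A)"
proof (rule pmf_eqI)
  fix x
  have "C \<noteq> {}" using assms(2) by blast
  then show "pmf (cond_pmf (pmf_of_set C) A) x = pmf (pmf_of_set (C \<inter> A)) x"
    using assms card_gt_0_iff[of "C \<inter> A"]
    by (auto simp: pmf_cond measure_pmf_of_set indicator_def card_gt_0_iff)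
qed

lemma bind_map_pmf_cond_fibres:
  "bind_pmf (map_pmf h p) (\<lambda>c. cond_pmf p {x. h x = c}) = p"
  by (rule bind_cond_pmf_cancel) (auto simp: measure_map_pmf vimage_def eq_commute)

lemma bind_pmf_of_set_fibres:
  assumes "finite S" "S \<noteq> {}"
  shows "bind_pmf (map_pmf h (pmf_of_set S)) (\<lambda>c. pmf_of_set {x \<in> S. h x = c}) = pmf_of_set S"
proof -
  have "pmf_of_set {x \<in> S. h x = c} = cond_pmf (pmf_of_set S) {x. h x = c}"
    if "c \<in> set_pmf (map_pmf h (pmf_of_set S))" for c
    using that assms by (subst cond_pmf_of_set) (auto intro: arg_cong[where f = pmf_of_set])
  then have "bind_pmf (map_pmf h (pmf_of_set S)) (\<lambda>c. pmf_of_set {x \<in> S. h x = c})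
      = bind_pmf (map_pmf h (pmf_of_set S)) (\<lambda>c. cond_pmf (pmf_of_set S) {x. h x = c})"
    by (rule bind_pmf_cong[OF refl])
  then show ?thesis by (simp only: bind_map_pmf_cond_fibres)
qed

lemma pmf_eq_infsum_consistent_cond:
  fixes \<mu> :: "'v pcol pmf" and p :: "('v \<Rightarrow> nat) pmf"
  assumes fin: "finite (set_pmf \<mu>)"
    and ne: "\<And>x. x \<in> set_pmf \<mu> \<Longrightarrow> set_pmf p \<inter> {\<tau>. consistent \<tau> x} \<noteq> {}"
    and mix: "bind_pmf \<mu> (\<lambda>x. cond_pmf p {\<tau>. consistent \<tau> x}) = p"
  shows "pmf p \<sigma> = (\<Sum>\<^sub>\<infinity>\<sigma>' \<in> {\<sigma>'. consistent \<sigma> \<sigma>'}.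
                        pmf \<mu> \<sigma>' * pmf (cond_pmf p {\<tau>. consistent \<tau> \<sigma>'}) \<sigma>)"
proof -
  let ?A = "{\<sigma>'. consistent \<sigma> \<sigma>'}"
  let ?B = "set_pmf \<mu> \<inter> ?A"
  let ?f = "\<lambda>\<sigma>'. pmf \<mu> \<sigma>' * pmf (cond_pmf p {\<tau>. consistent \<tau> \<sigma>'}) \<sigma>"
  have "pmf p \<sigma> = (\<integral>x. pmf (cond_pmf p {\<tau>. consistent \<tau> x}) \<sigma> \<partial>measure_pmf \<mu>)"
    by (subst mix[symmetric]) (rule pmf_bind)
  also have "\<dots> = sum ?f ?B"
    by (subst integral_measure_pmf_real[where A = ?B])
       (use fin ne in \<open>auto simp: pmf_cond split: if_splits intro: sum.cong\<close>)
  also have "\<dots> = infsum ?f ?A"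
    by (rule infsumI[symmetric], rule has_sum_finite_neutralI) (use fin in \<open>auto simp: set_pmf_iff\<close>)
  finally show ?thesis .
qed

lemma pre_Gibbs_if_mixture:
  assumes finC: "finite C" and fin: "finite (set_pmf \<mu>)"
    and ne: "\<And>x. x \<in> set_pmf \<mu> \<Longrightarrow> C \<inter> {\<tau>. consistent \<tau> x} \<noteq> {}"
    and mix: "bind_pmf \<mu> (\<lambda>x. pmf_of_set (C \<inter> {\<tau>. consistent \<tau> x})) = pmf_of_set C"
  shows "pre_Gibbs \<mu> C"
  unfolding pre_Gibbs_def
proof (intro ballI pmf_eq_infsum_consistent_cond[OF fin])
  have C: "C \<noteq> {}" using ne set_pmf_not_empty by fast
  show "set_pmf (pmf_of_set C) \<inter> {\<tau>. consistent \<tau> x} \<noteq> {}" if "x \<in> set_pmf \<mu>" for x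
    using ne[OF that] C finC by simp
  show "bind_pmf \<mu> (\<lambda>x. cond_pmf (pmf_of_set C) {\<tau>. consistent \<tau> x}) = pmf_of_set C"
    using mix by (simp add: cond_pmf_of_set[OF finC ne] cong: bind_pmf_cong)
qed

lemma first_of_in:
  assumes "S \<subseteq> set xs" "S \<noteq> {}"
  shows "first_of xs S \<in> S"
proof -
  have "filter (\<lambda>x. x \<in> S) xs \<noteq> []" using assms by (auto simp: filter_empty_conv)
  then show ?thesis unfolding first_of_def using hd_in_set by fastforce
qed

lemma fold_mono_fst_antimono_snd:
  assumes "\<And>x A F. A \<subseteq> fst (g x (A, F)) \<and> snd (g x (A, F)) \<subseteq> F"
  shows "A \<subseteq> fst (fold g xs (A, F)) \<and> snd (fold g xs (A, F)) \<subseteq> F"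
proof (induction xs arbitrary: A F)
  case (Cons x xs)
  show ?case
    using Cons.IH[of "fst (g x (A, F))" "snd (g x (A, F))"] assms[of A x F] by auto
qed simp

lemma finite_colourings: "finite V \<Longrightarrow> finite (colourings V q)"
proof -
  assume "finite V"
  have "colourings V q = {f. \<forall>x. (x \<in> V \<longrightarrow> f x \<in> {1..q}) \<and> (x \<notin> V \<longrightarrow> f x = 0)}"
    unfolding colourings_def by auto
  then show ?thesis using finite_set_of_finite_funs[OF \<open>finite V\<close>, of "{1..q}" 0] by simp
qed

lemma finite_CX: "finite V \<Longrightarrow> finite (CX V E verts pin q X)"
  by (rule finite_subset[OF _ finite_colourings]) (auto simp: CX_def proper_colourings_def)

lemma finite_Cfix: "finite V \<Longrightarrow> finite (Cfix V E verts pin q v c)"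
  by (rule finite_subset[OF _ finite_colourings]) (auto simp: Cfix_def proper_colourings_def)

lemma CX_fun_upd:
  assumes "X u = None"
  shows "CX V E verts pin q (X(u := Some c)) = {\<sigma> \<in> CX V E verts pin q X. \<sigma> u = c}"
  using assms unfolding CX_def consistent_def by (auto split: if_splits)

lemma CX_single: "CX V E verts pin q ((\<lambda>_. None)(v := Some c)) = Cfix V E verts pin q v c"
  unfolding CX_def Cfix_def consistent_def by auto

lemma Cfix_inter_consistent:
  "X v = Some c \<Longrightarrow> Cfix V E verts pin q v c \<inter> {\<tau>. consistent \<tau> X} = CX V E verts pin q X"
  unfolding CX_def Cfix_def consistent_def by auto

lemma set_pmf_marginal:
  "finite V \<Longrightarrow> CX V E verts pin q X \<noteq> {} \<Longrightarrow>
     set_pmf (marginal V E verts pin q X u) = (\<lambda>\<sigma>. \<sigma> u) ` CX V E verts pin q X"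
  by (simp add: marginal_def finite_CX)

lemma bind_marginal_fun_upd:
  assumes "finite V" "X u = None" "CX V E verts pin q X \<noteq> {}"
  shows "bind_pmf (marginal V E verts pin q X u) (\<lambda>c. pmf_of_set (CX V E verts pin q (X(u := Some c))))
       = pmf_of_set (CX V E verts pin q X)"
  unfolding marginal_def CX_fun_upd[where X = X, OF assms(2)]
  by (rule bind_pmf_of_set_fibres[OF finite_CX[OF assms(1)] assms(3)])

lemma CX_fun_upd_ne:
  assumes "finite V" "X u = None" "CX V E verts pin q X \<noteq> {}"
    and "c \<in> set_pmf (marginal V E verts pin q X u)"
  shows "CX V E verts pin q (X(u := Some c)) \<noteq> {}"
  using assms by (auto simp: CX_fun_upd[where X = X] set_pmf_marginal)

lemma Gamma_ver_mono: "A \<subseteq> B \<Longrightarrow> Gamma_ver E verts A \<subseteq> Gamma_ver E verts B"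
  unfolding Gamma_ver_def by blast

lemma pre_Gibbs_Cfix:
  assumes "finite V" "finite (set_pmf \<mu>)"
    and "\<And>X. X \<in> set_pmf \<mu> \<Longrightarrow> X v = Some c \<and> CX V E verts pin q X \<noteq> {}"
    and "bind_pmf \<mu> (\<lambda>X. pmf_of_set (CX V E verts pin q X)) = pmf_of_set (Cfix V E verts pin q v c)"
  shows "pre_Gibbs \<mu> (Cfix V E verts pin q v c)"
  using assms by (intro pre_Gibbs_if_mixture finite_Cfix)
    (simp_all add: Cfix_inter_consistent cong: bind_pmf_cong)

locale coupling_process =
  fixes V :: "'v set" and E :: "'e set" and verts :: "'e \<Rightarrow> 'v set"
    and pin :: "'e \<Rightarrow> nat set" and q k2 :: nat and v :: 'v and c1 c2 :: nat
    and vs :: "'v list" and es :: "'e list"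
    and coup :: "'v pcol \<Rightarrow> 'v pcol \<Rightarrow> 'v \<Rightarrow> (nat \<times> nat) pmf"
  assumes finite_V: "finite V" and set_vs: "set vs = V" and set_es: "set es = E"
    and coupling:
      "\<And>X Y u. is_coupling (coup X Y u)
                    (marginal V E verts pin q X u) (marginal V E verts pin q Y u)"
    and Cfix_c1_ne: "Cfix V E verts pin q v c1 \<noteq> {}"
    and Cfix_c2_ne: "Cfix V E verts pin q v c2 \<noteq> {}"
begin

abbreviation "CXH \<equiv> CX V E verts pin q"
abbreviation "step \<equiv> coupling_step V E verts pin q k2 vs es coup"

definition after_colouring ::
  "'v set \<Rightarrow> 'v set \<Rightarrow> 'v pcol \<Rightarrow> 'v pcol \<Rightarrow> 'e set \<Rightarrow> 'v \<Rightarrow> nat \<Rightarrow> nat \<Rightarrow> ('v, 'e) cstate" where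
  "after_colouring V1 Vcol X Y E' u cx cy =
    (let X' = X(u := Some cx);
         Y' = Y(u := Some cy);
         Vcol' = insert u Vcol;
         V1' = (if cx \<noteq> cy then insert u V1 else V1);
         E1 = E' - {e'. u \<in> verts e' \<and> satisfies verts pin X' e' \<and> satisfies verts pin Y' e'};
         (V1'', E2) = fold (\<lambda>e' (A, F).
              if e' \<in> F \<and> u \<in> verts e' \<and> crossing V verts A e' \<and> card (verts e' \<inter> Vcol') = k2
              then (A \<union> (verts e' - Vcol'), F - {e'}) else (A, F)) es (V1', E1)
     in (V1'', Vcol', X', Y', E2))"

lemma coupling_step_eq:
  "step (V1, Vcol, X, Y, E') =
    (if \<not> (\<exists>e\<in>E'. crossing V verts V1 e) then return_pmf (V1, Vcol, X, Y, E')
     else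
       let e = first_of es {e \<in> E'. crossing V verts V1 e};
           U = verts e \<inter> (V - V1) - Vcol
       in if U = {} then return_pmf (V1, Vcol, X, Y, E' - {e})
       else map_pmf (\<lambda>(cx, cy). after_colouring V1 Vcol X Y E' (first_of vs U) cx cy)
              (coup X Y (first_of vs U)))"
  unfolding coupling_step_def after_colouring_def Let_def prod.case by (rule refl)

lemma after_colouring_components:
  assumes "after_colouring V1 Vcol X Y E' u cx cy = (V1', Vcol', X', Y', E'')"
  shows "V1 \<subseteq> V1'" "Vcol' = insert u Vcol" "X' = X(u := Some cx)" "Y' = Y(u := Some cy)"
    "E'' \<subseteq> E'"
proof -
  let ?g = "\<lambda>e' (A, F). if e' \<in> F \<and> u \<in> verts e' \<and> crossing V verts A e'
                          \<and> card (verts e' \<inter> insert u Vcol) = k2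
                        then (A \<union> (verts e' - insert u Vcol), F - {e'}) else (A, F)"
  let ?V1 = "if cx \<noteq> cy then insert u V1 else V1"
  let ?E1 = "E' - {e'. u \<in> verts e' \<and> satisfies verts pin (X(u := Some cx)) e'
                    \<and> satisfies verts pin (Y(u := Some cy)) e'}"
  have "after_colouring V1 Vcol X Y E' u cx cy = (fst (fold ?g es (?V1, ?E1)), insert u Vcol,
          X(u := Some cx), Y(u := Some cy), snd (fold ?g es (?V1, ?E1)))"
    unfolding after_colouring_def Let_def by (simp split: prod.split)
  moreover have "?V1 \<subseteq> fst (fold ?g es (?V1, ?E1)) \<and> snd (fold ?g es (?V1, ?E1)) \<subseteq> ?E1"
    by (rule fold_mono_fst_antimono_snd) auto
  ultimately show "V1 \<subseteq> V1'" "Vcol' = insert u Vcol" "X' = X(u := Some cx)"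
    "Y' = Y(u := Some cy)" "E'' \<subseteq> E'"
    using assms by auto
qed

lemma out_after_colouring:
  "out_X (after_colouring V1 Vcol X Y E' u cx cy) = X(u := Some cx)"
  "out_Y (after_colouring V1 Vcol X Y E' u cx cy) = Y(u := Some cy)"
  using after_colouring_components[of V1 Vcol X Y E' u cx cy]
  by (cases "after_colouring V1 Vcol X Y E' u cx cy", simp add: out_X_def out_Y_def)+

lemma coupling_step_cases:
  assumes "E' \<subseteq> E"
  obtains (stop) E'' where "step (V1, Vcol, X, Y, E') = return_pmf (V1, Vcol, X, Y, E'')"
    "E'' \<subseteq> E'"
  | (colour) u where "step (V1, Vcol, X, Y, E') =
        map_pmf (\<lambda>(cx, cy). after_colouring V1 Vcol X Y E' u cx cy) (coup X Y u)"
    "u \<notin> Vcol" "u \<in> Gamma_ver E verts V1"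
proof (cases "\<exists>e\<in>E'. crossing V verts V1 e")
  case False
  then show ?thesis using stop[of E'] by (simp add: coupling_step_eq)
next
  case True
  define e where "e = first_of es {e \<in> E'. crossing V verts V1 e}"
  define U where "U = verts e \<inter> (V - V1) - Vcol"
  have e: "e \<in> E" "crossing V verts V1 e"
    using first_of_in[of "{e \<in> E'. crossing V verts V1 e}" es] True assms set_es
    unfolding e_def by auto
  show ?thesis
  proof (cases "U = {}")
    case True
    then show ?thesis using stop[of "E' - {e}"] \<open>\<exists>e\<in>E'. _\<close>
      by (simp add: coupling_step_eq e_def U_def Let_def)
  next
    case False
    have u: "first_of vs U \<in> U" using first_of_in[of U vs] False set_vs by (auto simp: U_def)
    from e(2) obtain w where "w \<in> verts e" "w \<in> V1" unfolding crossing_def by auto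
    then have "first_of vs U \<in> Gamma_ver E verts V1"
      using e(1) u unfolding Gamma_ver_def U_def by blast
    then show ?thesis using colour[of "first_of vs U"] False u \<open>\<exists>e\<in>E'. _\<close>
      by (simp add: coupling_step_eq e_def U_def Let_def)
  qed
qed

definition coupling_inv :: "('v, 'e) cstate \<Rightarrow> bool" where
  "coupling_inv s = (case s of (V1, Vcol, X, Y, E') \<Rightarrow>
      Vcol \<subseteq> Gamma_ver E verts V1 \<and> E' \<subseteq> E \<and> X v = Some c1 \<and> Y v = Some c2 \<and>
      (\<forall>w. w \<notin> Vcol \<longrightarrow> X w = None \<and> Y w = None) \<and> CXH X \<noteq> {} \<and> CXH Y \<noteq> {})"

lemma coupling_inv_init: "coupling_inv (coupling_init E v c1 c2)"
  using Cfix_c1_ne Cfix_c2_ne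
  by (auto simp: coupling_inv_def coupling_init_def CX_single Gamma_ver_def)

lemma set_pmf_coup:
  "set_pmf (coup X Y u) \<subseteq> set_pmf (marginal V E verts pin q X u) \<times> set_pmf (marginal V E verts pin q Y u)"
proof -
  have "map_pmf fst (coup X Y u) = marginal V E verts pin q X u"
       "map_pmf snd (coup X Y u) = marginal V E verts pin q Y u"
    using coupling unfolding is_coupling_def by auto
  moreover have "fst p \<in> set_pmf (map_pmf fst (coup X Y u))"
    "snd p \<in> set_pmf (map_pmf snd (coup X Y u))" if "p \<in> set_pmf (coup X Y u)" for p
    using that by simp_all
  ultimately show ?thesis by (metis mem_Times_iff subsetI)
qed

lemma coupling_inv_step:
  assumes inv: "coupling_inv s" and s': "s' \<in> set_pmf (step s)"
  shows "coupling_inv s'"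
proof -
  obtain V1 Vcol X Y E' where s: "s = (V1, Vcol, X, Y, E')" by (cases s) auto
  have I: "Vcol \<subseteq> Gamma_ver E verts V1" "E' \<subseteq> E" "X v = Some c1" "Y v = Some c2"
    "\<forall>w. w \<notin> Vcol \<longrightarrow> X w = None \<and> Y w = None" "CXH X \<noteq> {}" "CXH Y \<noteq> {}"
    using inv by (auto simp: s coupling_inv_def)
  show ?thesis
  proof (cases rule: coupling_step_cases[OF I(2), of V1 Vcol X Y, case_names stop colour])
    case (stop E'')
    then show ?thesis using s' inv by (auto simp: s coupling_inv_def)
  next
    case (colour u)
    obtain cx cy where c: "(cx, cy) \<in> set_pmf (coup X Y u)"
      and s'_eq: "after_colouring V1 Vcol X Y E' u cx cy = s'"
      using s' colour(1) by (auto simp: s)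
    obtain V1' Vcol' X' Y' E'' where s'': "s' = (V1', Vcol', X', Y', E'')" by (cases s') auto
    note new = after_colouring_components[OF s'_eq[unfolded s'']]
    have "X u = None" "Y u = None" using I(5) colour(2) by auto
    moreover have "Vcol' \<subseteq> Gamma_ver E verts V1'"
      using new(2) I(1) colour(3) Gamma_ver_mono[OF new(1), of E verts] by auto
    moreover have "CXH X' \<noteq> {}" "CXH Y' \<noteq> {}"
      using CX_fun_upd_ne[OF finite_V] set_pmf_coup c new(3,4) I(6,7) \<open>X u = None\<close> \<open>Y u = None\<close>
      by blast+
    ultimately show ?thesis using new I unfolding s'' coupling_inv_def by auto
  qed
qed

lemma finite_set_pmf_step:
  assumes "coupling_inv s"
  shows "finite (set_pmf (step s))"
proof -
  obtain V1 Vcol X Y E' where s: "s = (V1, Vcol, X, Y, E')" by (cases s) auto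
  have I: "E' \<subseteq> E" "CXH X \<noteq> {}" "CXH Y \<noteq> {}" using assms by (auto simp: s coupling_inv_def)
  show ?thesis
  proof (cases rule: coupling_step_cases[OF I(1), of V1 Vcol X Y, case_names stop colour])
    case (colour u)
    have "finite (set_pmf (coup X Y u))"
      by (rule finite_subset[OF set_pmf_coup])
         (simp add: set_pmf_marginal[OF finite_V] I(2,3) finite_CX[OF finite_V])
    then show ?thesis using colour by (simp add: s)
  qed (simp add: s)
qed

lemma bind_step_CX:
  assumes "coupling_inv s"
  shows "bind_pmf (step s) (\<lambda>s'. pmf_of_set (CXH (out_X s'))) = pmf_of_set (CXH (out_X s))"
    and "bind_pmf (step s) (\<lambda>s'. pmf_of_set (CXH (out_Y s'))) = pmf_of_set (CXH (out_Y s))"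
proof -
  obtain V1 Vcol X Y E' where s: "s = (V1, Vcol, X, Y, E')" by (cases s) auto
  have I: "E' \<subseteq> E" "\<forall>w. w \<notin> Vcol \<longrightarrow> X w = None \<and> Y w = None" "CXH X \<noteq> {}" "CXH Y \<noteq> {}"
    using assms by (auto simp: s coupling_inv_def)
  have "bind_pmf (step s) (\<lambda>s'. pmf_of_set (CXH (out_X s'))) = pmf_of_set (CXH (out_X s))
      \<and> bind_pmf (step s) (\<lambda>s'. pmf_of_set (CXH (out_Y s'))) = pmf_of_set (CXH (out_Y s))"
  proof (cases rule: coupling_step_cases[OF I(1), of V1 Vcol X Y, case_names stop colour])
    case (stop E'')
    then show ?thesis by (simp add: s out_X_def out_Y_def bind_return_pmf)
  next
    case (colour u)
    have "X u = None" "Y u = None" using I(2) colour(2) by auto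
    have marg: "map_pmf fst (coup X Y u) = marginal V E verts pin q X u"
      "map_pmf snd (coup X Y u) = marginal V E verts pin q Y u"
      using coupling unfolding is_coupling_def by auto
    have "bind_pmf (step s) (\<lambda>s'. pmf_of_set (CXH (out_X s')))
        = bind_pmf (map_pmf fst (coup X Y u)) (\<lambda>c. pmf_of_set (CXH (X(u := Some c))))"
      by (simp add: s colour(1) bind_map_pmf split_def out_after_colouring)
    also have "\<dots> = pmf_of_set (CXH X)"
      unfolding marg by (rule bind_marginal_fun_upd[OF finite_V \<open>X u = None\<close> I(3)])
    moreover have "bind_pmf (step s) (\<lambda>s'. pmf_of_set (CXH (out_Y s')))
        = bind_pmf (map_pmf snd (coup X Y u)) (\<lambda>c. pmf_of_set (CXH (Y(u := Some c))))"
      by (simp add: s colour(1) bind_map_pmf split_def out_after_colouring)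
    moreover have "\<dots> = pmf_of_set (CXH Y)"
      unfolding marg by (rule bind_marginal_fun_upd[OF finite_V \<open>Y u = None\<close> I(4)])
    ultimately show ?thesis by (simp add: s out_X_def out_Y_def)
  qed
  then show "bind_pmf (step s) (\<lambda>s'. pmf_of_set (CXH (out_X s'))) = pmf_of_set (CXH (out_X s))"
    and "bind_pmf (step s) (\<lambda>s'. pmf_of_set (CXH (out_Y s'))) = pmf_of_set (CXH (out_Y s))"
    by blast+
qed

abbreviation "iterate n \<equiv> ((\<lambda>p. bind_pmf p step) ^^ n) (return_pmf (coupling_init E v c1 c2))"

lemma iterate_invariants:
  "(\<forall>s\<in>set_pmf (iterate n). coupling_inv s) \<and> finite (set_pmf (iterate n))
   \<and> bind_pmf (iterate n) (\<lambda>s. pmf_of_set (CXH (out_X s))) = pmf_of_set (Cfix V E verts pin q v c1)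
   \<and> bind_pmf (iterate n) (\<lambda>s. pmf_of_set (CXH (out_Y s))) = pmf_of_set (Cfix V E verts pin q v c2)"
proof (induction n)
  case 0
  show ?case using coupling_inv_init
    by (simp add: bind_return_pmf coupling_init_def out_X_def out_Y_def CX_single)
next
  case (Suc n)
  then have inv: "\<And>s. s \<in> set_pmf (iterate n) \<Longrightarrow> coupling_inv s" by blast
  have "bind_pmf (iterate (Suc n)) (\<lambda>s. pmf_of_set (CXH (out_X s)))
      = bind_pmf (iterate n) (\<lambda>s. pmf_of_set (CXH (out_X s)))"
    and "bind_pmf (iterate (Suc n)) (\<lambda>s. pmf_of_set (CXH (out_Y s)))
      = bind_pmf (iterate n) (\<lambda>s. pmf_of_set (CXH (out_Y s)))"
    by (simp_all add: bind_assoc_pmf bind_step_CX inv cong: bind_pmf_cong)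
  moreover have "\<forall>s\<in>set_pmf (iterate (Suc n)). coupling_inv s"
    using inv coupling_inv_step by simp blast
  moreover have "finite (set_pmf (iterate (Suc n)))"
    using Suc.IH inv finite_set_pmf_step by (auto simp del: split_paired_all)
  ultimately show ?case using Suc.IH by simp
qed

lemma iterate_output:
  "(\<forall>s\<in>set_pmf (iterate n). out_Vcol s \<subseteq> Gamma_ver E verts (out_V1 s))
   \<and> pre_Gibbs (map_pmf out_X (iterate n)) (Cfix V E verts pin q v c1)
   \<and> pre_Gibbs (map_pmf out_Y (iterate n)) (Cfix V E verts pin q v c2)"
proof -
  note props = iterate_invariants[of n]
  have "out_Vcol s \<subseteq> Gamma_ver E verts (out_V1 s)" "out_X s v = Some c1" "out_Y s v = Some c2"
    "CXH (out_X s) \<noteq> {}" "CXH (out_Y s) \<noteq> {}" if "s \<in> set_pmf (iterate n)" for s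
    using props that by (cases s, auto simp: coupling_inv_def out_Vcol_def out_V1_def
                                             out_X_def out_Y_def)
  then show ?thesis
    using props by (auto intro!: pre_Gibbs_Cfix[OF finite_V] simp: bind_map_pmf o_def)
qed

end

theorem lemma3p1:
  fixes V :: "'v set" and E :: "'e set" and verts :: "'e \<Rightarrow> 'v set"
    and pin :: "'e \<Rightarrow> nat set" and q k k1 k2 :: nat and v :: 'v and c1 c2 :: nat
    and vs :: "'v list" and es :: "'e list"
    and coup :: "'v pcol \<Rightarrow> 'v pcol \<Rightarrow> 'v \<Rightarrow> (nat \<times> nat) pmf"
  assumes "finite V" and "finite E"
    and "\<forall>e\<in>E. verts e \<subseteq> V"
    and "\<forall>e\<in>E. pin e \<subseteq> {1..q}"
    and "0 < k2" and "k2 < k1" and "k1 \<le> k"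
    and "\<forall>e\<in>E. k1 \<le> card (verts e) \<and> card (verts e) \<le> k"
    and "v \<in> V" and "c1 \<in> {1..q}" and "c2 \<in> {1..q}" and "c1 \<noteq> c2"
    and "distinct vs" and "set vs = V" and "distinct es" and "set es = E"
    and "\<forall>X Y u. maximal_coupling (coup X Y u)
                  (marginal V E verts pin q X u) (marginal V E verts pin q Y u)"
    and "Cfix V E verts pin q v c1 \<noteq> {}" and "Cfix V E verts pin q v c2 \<noteq> {}"
  shows "(\<forall>s\<in>set_pmf (coupling_output V E verts pin q k2 vs es coup v c1 c2).
            out_Vcol s \<subseteq> Gamma_ver E verts (out_V1 s))
       \<and> pre_Gibbs (map_pmf out_X (coupling_output V E verts pin q k2 vs es coup v c1 c2))
                   (Cfix V E verts pin q v c1)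
       \<and> pre_Gibbs (map_pmf out_Y (coupling_output V E verts pin q k2 vs es coup v c1 c2))
                   (Cfix V E verts pin q v c2)"
proof -
  interpret coupling_process V E verts pin q k2 v c1 c2 vs es coup
    using assms by unfold_locales (auto simp: maximal_coupling_def)
  show ?thesis
    using iterate_output[of "card V + card E"] by (simp add: coupling_output_def)
qed

end
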